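(* Let $a$ be a weak composition of length $n$. Then \[\mathcal{A}_a=\sum_{S\in\mathrm{HSSF}(a)}\mathfrak{L}_{\mathrm{wt}(S)}.\]
   Context: $D(a)$: $a_i$ left-justified boxes in row $i$, row 1 lowest, columns numbered from the left. For a filling $S$, $\mathrm{wt}(S)$ is the weak composition of length $n$ whose $i$th part is the number of entries $i$. Triples (rows $r<s$): Type A: $\gamma=(r,c),\alpha=(r,c+1),\beta=(s,c+1)$ with $a_r\ge a_s$; Type B: $\gamma=(s,c),\alpha=(s,c+1),\beta=(r,c)$ with $a_s>a_r$; inversion triple: $\beta>\gamma\ge\alpha$ or $\gamma\ge\alpha>\beta$. $\mathcal{A}\mathrm{SSF}(a)$ is the set of fillings of $D(a)$ with positive integers, rows weakly decreasing left to right, distinct entries in each column, all triples inversion triples, and first-column entry of each nonempty row $i$ equal to $i$; $\mathcal{A}_a=\sum_{S\in\mathcal{A}\mathrm{SSF}(a)}x^{\mathrm{wt}(S)}$. $S\in\mathcal{A}\mathrm{SSF}(a)$ is particle-highest if for every entry value $i$ appearing in $S$, either the leftmost occurrence of $i$ is in the first column, or some occurrence of $i^\uparrow$ lies in a column weakly right of the leftmost $i$, where $i^\uparrow$ is the smallest entry of $S$ larger than $i$. $\mathrm{HSSF}(a)$ is the set of particle-highest elements of $\mathcal{A}\mathrm{SSF}(a)$. Fixed slides: a local move replaces consecutive entries $(0,k)$ at positions $p,p+1$ of a weak composition by $(i,j)$ with $i+j=k$, $i,j\ge0$; a fixed slide of $b$ is obtained from $b$ by a (possibly empty) sequence of such moves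 where $j>0$ is required whenever $b_{p+1}\neq 0$. $\mathfrak{L}_b=\sum x^{c}$ over the set of fixed slides $c$ of $b$. *)

theory Defs
  imports Main
begin

text \<open>Rows are numbered 1..n (row 1 lowest), so row i has a!(i-1) boxes.
  Cells are pairs (row, column), columns numbered from 1.\<close>

definition rowlen :: "nat list \<Rightarrow> nat \<Rightarrow> nat" where
  "rowlen a i = a ! (i - 1)"

definition diag :: "nat list \<Rightarrow> (nat \<times> nat) set" where
  "diag a = {(i, c). 1 \<le> i \<and> i \<le> length a \<and> 1 \<le> c \<and> c \<le> rowlen a i}"

type_synonym filling = "nat \<times> nat \<Rightarrow> nat"

definition wt :: "nat list \<Rightarrow> filling \<Rightarrow> nat list" where
  "wt a S = map (\<lambda>i. card {x \<in> diag a. S x = i}) [1..<length a + 1]"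

definition inv_triple :: "nat \<Rightarrow> nat \<Rightarrow> nat \<Rightarrow> bool" where
  "inv_triple \<beta> \<gamma> \<alpha> \<longleftrightarrow> (\<beta> > \<gamma> \<and> \<gamma> \<ge> \<alpha>) \<or> (\<gamma> \<ge> \<alpha> \<and> \<alpha> > \<beta>)"

text \<open>Type A triples: rows r<s, a_r \<ge> a_s, cells gamma=(r,c), alpha=(r,c+1), beta=(s,c+1);
  Type B triples: rows r<s, a_s > a_r, gamma=(s,c), alpha=(s,c+1), beta=(r,c).\<close>
definition all_triples_inv :: "nat list \<Rightarrow> filling \<Rightarrow> bool" where
  "all_triples_inv a S \<longleftrightarrow>
    (\<forall>r s c. r < s \<and> rowlen a r \<ge> rowlen a s \<and>
        (r, c) \<in> diag a \<and> (r, c+1) \<in> diag a \<and> (s, c+1) \<in> diag a \<longrightarrow>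
        inv_triple (S (s, c+1)) (S (r, c)) (S (r, c+1))) \<and>
    (\<forall>r s c. r < s \<and> rowlen a s > rowlen a r \<and>
        (s, c) \<in> diag a \<and> (s, c+1) \<in> diag a \<and> (r, c) \<in> diag a \<longrightarrow>
        inv_triple (S (r, c)) (S (s, c)) (S (s, c+1)))"

definition ASSF :: "nat list \<Rightarrow> filling set" where
  "ASSF a = {S.
     (\<forall>x. x \<notin> diag a \<longrightarrow> S x = 0) \<and>
     (\<forall>x \<in> diag a. S x > 0) \<and>
     (\<forall>i c. (i, c) \<in> diag a \<and> (i, c+1) \<in> diag a \<longrightarrow> S (i, c) \<ge> S (i, c+1)) \<and>
     (\<forall>i j c. (i, c) \<in> diag a \<and> (j, c) \<in> diag a \<and> i \<noteq> j \<longrightarrow> S (i, c) \<noteq> S (j, c)) \<and>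
     all_triples_inv a S \<and>
     (\<forall>i. (i, 1) \<in> diag a \<longrightarrow> S (i, 1) = i)}"

text \<open>Coefficient of x^c in the atom A_a.\<close>
definition atom_coeff :: "nat list \<Rightarrow> nat list \<Rightarrow> nat" where
  "atom_coeff a c = card {S \<in> ASSF a. wt a S = c}"

definition entries :: "nat list \<Rightarrow> filling \<Rightarrow> nat set" where
  "entries a S = S ` diag a"

definition leftmost_col :: "nat list \<Rightarrow> filling \<Rightarrow> nat \<Rightarrow> nat" where
  "leftmost_col a S v = (LEAST c. \<exists>r. (r, c) \<in> diag a \<and> S (r, c) = v)"

definition particle_highest :: "nat list \<Rightarrow> filling \<Rightarrow> bool" where
  "particle_highest a S \<longleftrightarrow>
    (\<forall>v \<in> entries a S.
       leftmost_col a S v = 1 \<or>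
       (\<exists>u. u \<in> entries a S \<and> v < u \<and> (\<forall>w \<in> entries a S. v < w \<longrightarrow> u \<le> w) \<and>
            (\<exists>r c. (r, c) \<in> diag a \<and> S (r, c) = u \<and> c \<ge> leftmost_col a S v)))"

definition HSSF :: "nat list \<Rightarrow> filling set" where
  "HSSF a = {S \<in> ASSF a. particle_highest a S}"

text \<open>Fixed slides of b (0-indexed positions p, p+1 of the list).\<close>
inductive fixed_slide :: "nat list \<Rightarrow> nat list \<Rightarrow> bool" for b where
  refl: "fixed_slide b b"
| move: "\<lbrakk>fixed_slide b c; Suc p < length c; c ! p = 0; c ! Suc p = k; i + j = k;
          b ! Suc p \<noteq> 0 \<longrightarrow> j > 0\<rbrakk>
         \<Longrightarrow> fixed_slide b (c[p := i, Suc p := j])"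

text \<open>Coefficient of x^c in the fundamental slide polynomial L_b
  (the set of fixed slides is a set, so each contributes once).\<close>
definition slide_coeff :: "nat list \<Rightarrow> nat list \<Rightarrow> nat" where
  "slide_coeff b c = (if fixed_slide b c then 1 else 0)"

end

theory Submission
  imports Defs "HOL-Library.FuncSet"
begin

text \<open>Every \<open>S \<in> \<A>SSF(a)\<close> determines a particle-highest filling \<open>raise_all a S\<close>: each entry
  \<open>v\<close> violating particle-highestness (not in the first column, all \<open>v\<^sup>\<up>\<close> strictly left of the
  leftmost \<open>v\<close>) is raised to the nearest larger entry that does not violate it. The filling
  conditions survive because merged values always sit in decreasing order from left to right, and
  \<open>raise_all a S\<close> is the only particle-highest filling \<open>T\<close> that \<open>S\<close> raises to in this sense.
  Conversely, the fillings raising to a fixed \<open>T\<close> correspond to the fixed slides of \<open>wt T\<close>: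
  merging the entries \<open>v\<close> into \<open>v + 1\<close> undoes a local move, a local move is realised by lowering
  the rightmost entries \<open>v + 1\<close> to \<open>v\<close>, and a counting argument shows that the weight determines
  the filling. Hence \<open>raise_all\<close> is a bijection from the fillings of weight \<open>c\<close> onto the
  particle-highest fillings having \<open>c\<close> as a fixed slide of their weight.\<close>

lemma finite_diag: "finite (diag a)"
proof -
  have "diag a \<subseteq> {1..length a} \<times> {1..Max (set a)}"
  proof
    fix x assume "x \<in> diag a"
    then obtain i c where x: "x = (i, c)"
      and h: "1 \<le> i" "i \<le> length a" "1 \<le> c" "c \<le> rowlen a i"
      by (auto simp: diag_def)
    then have "rowlen a i \<le> Max (set a)" by (simp add: rowlen_def)
    then show "x \<in> {1..length a} \<times> {1..Max (set a)}" using h x by auto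
  qed
  then show ?thesis by (rule finite_subset) auto
qed

lemma diag_first_col: "(i, c) \<in> diag a \<Longrightarrow> (i, 1) \<in> diag a"
  by (simp add: diag_def)

lemma ASSF_outside: "S \<in> ASSF a \<Longrightarrow> x \<notin> diag a \<Longrightarrow> S x = 0"
  unfolding ASSF_def by blast

lemma ASSF_pos: "S \<in> ASSF a \<Longrightarrow> x \<in> diag a \<Longrightarrow> 0 < S x"
  unfolding ASSF_def by blast

lemma ASSF_row_decreasing:
  "S \<in> ASSF a \<Longrightarrow> (i, c) \<in> diag a \<Longrightarrow> (i, c + 1) \<in> diag a \<Longrightarrow> S (i, c + 1) \<le> S (i, c)"
  unfolding ASSF_def by blast

lemma ASSF_col_distinct:
  "S \<in> ASSF a \<Longrightarrow> (i, c) \<in> diag a \<Longrightarrow> (j, c) \<in> diag a \<Longrightarrow> S (i, c) = S (j, c) \<Longrightarrow> i = j"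
  unfolding ASSF_def by blast

lemma ASSF_col_inj:
  assumes "S \<in> ASSF a" "x \<in> diag a" "y \<in> diag a" "S x = S y" "snd x = snd y"
  shows "x = y"
  using assms ASSF_col_distinct[of S a "fst x" "snd x" "fst y"] by (cases x, cases y) auto

lemma ASSF_first_col: "S \<in> ASSF a \<Longrightarrow> (i, 1) \<in> diag a \<Longrightarrow> S (i, 1) = i"
  unfolding ASSF_def by blast

lemma ASSF_le_row:
  assumes S: "S \<in> ASSF a" and x: "(i, c) \<in> diag a"
  shows "S (i, c) \<le> i"
  using x
proof (induction c)
  case (Suc c)
  show ?case
  proof (cases "c = 0")
    case True
    then show ?thesis using Suc.prems ASSF_first_col[OF S] by simp
  next
    case False
    then have "(i, c) \<in> diag a" using Suc.prems by (simp add: diag_def)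
    then show ?thesis using Suc ASSF_row_decreasing[OF S, of i c] by fastforce
  qed
qed (simp add: diag_def)

lemma ASSF_le_length: "S \<in> ASSF a \<Longrightarrow> x \<in> diag a \<Longrightarrow> S x \<le> length a"
  using ASSF_le_row[of S a "fst x" "snd x"] by (auto simp: diag_def)

lemma finite_ASSF: "finite (ASSF a)"
proof -
  have "inj_on (\<lambda>S. restrict S (diag a)) (ASSF a)"
    by (rule inj_onI) (metis ASSF_outside ext restrict_apply')
  moreover have "(\<lambda>S. restrict S (diag a)) ` ASSF a \<subseteq> PiE (diag a) (\<lambda>_. {0..length a})"
    using ASSF_le_length by fastforce
  moreover have "finite (PiE (diag a) (\<lambda>_. {0..length a}))"
    using finite_diag by (intro finite_PiE) auto
  ultimately show ?thesis by (meson finite_imageD finite_subset)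
qed

lemma finite_HSSF: "finite (HSSF a)"
  using finite_ASSF by (rule finite_subset[rotated]) (auto simp: HSSF_def)

subsection \<open>Entries, leftmost columns and raisable entries\<close>

lemma entries_iff: "v \<in> entries a S \<longleftrightarrow> (\<exists>r c. (r, c) \<in> diag a \<and> S (r, c) = v)"
  unfolding entries_def by force

lemma finite_entries: "finite (entries a S)"
  unfolding entries_def using finite_diag by simp

lemma leftmost_col_attained:
  assumes "v \<in> entries a S"
  obtains r where "(r, leftmost_col a S v) \<in> diag a" "S (r, leftmost_col a S v) = v"
proof -
  have "\<exists>c r. (r, c) \<in> diag a \<and> S (r, c) = v" using assms by (auto simp: entries_iff)
  then have "\<exists>r. (r, leftmost_col a S v) \<in> diag a \<and> S (r, leftmost_col a S v) = v"
    unfolding leftmost_col_def by (rule LeastI_ex)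
  then show ?thesis using that by blast
qed

lemma leftmost_col_le: "(r, c) \<in> diag a \<Longrightarrow> S (r, c) = v \<Longrightarrow> leftmost_col a S v \<le> c"
  unfolding leftmost_col_def by (blast intro: Least_le)

lemma leftmost_col_eq_1_iff:
  assumes S: "S \<in> ASSF a"
  shows "v \<in> entries a S \<and> leftmost_col a S v = 1 \<longleftrightarrow> (v, 1) \<in> diag a"
proof
  assume "v \<in> entries a S \<and> leftmost_col a S v = 1"
  then obtain r where "(r, 1) \<in> diag a" "S (r, 1) = v"
    by (metis leftmost_col_attained)
  then show "(v, 1) \<in> diag a" using ASSF_first_col[OF S] by auto
next
  assume v: "(v, 1) \<in> diag a"
  then have "S (v, 1) = v" by (rule ASSF_first_col[OF S])
  with v have vE: "v \<in> entries a S" and "leftmost_col a S v \<le> 1"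
    by (auto simp: entries_iff leftmost_col_le)
  moreover obtain r where "(r, leftmost_col a S v) \<in> diag a"
    using leftmost_col_attained[OF vE] by blast
  then have "1 \<le> leftmost_col a S v" by (simp add: diag_def)
  ultimately show "v \<in> entries a S \<and> leftmost_col a S v = 1" by simp
qed

definition up_entry :: "nat list \<Rightarrow> filling \<Rightarrow> nat \<Rightarrow> nat" where
  "up_entry a S v = (LEAST u. u \<in> entries a S \<and> v < u)"

definition raisable :: "nat list \<Rightarrow> filling \<Rightarrow> nat \<Rightarrow> bool" where
  "raisable a S v \<longleftrightarrow> v \<in> entries a S \<and> leftmost_col a S v \<noteq> 1 \<and> (\<exists>u\<in>entries a S. v < u) \<and>
     (\<forall>r c. (r, c) \<in> diag a \<and> S (r, c) = up_entry a S v \<longrightarrow> c < leftmost_col a S v)"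

lemma up_entry:
  assumes "\<exists>u\<in>entries a S. v < u"
  shows "up_entry a S v \<in> entries a S" "v < up_entry a S v"
    and "\<And>w. w \<in> entries a S \<Longrightarrow> v < w \<Longrightarrow> up_entry a S v \<le> w"
proof -
  from assms obtain u where "u \<in> entries a S \<and> v < u" by blast
  then show "up_entry a S v \<in> entries a S" "v < up_entry a S v"
    unfolding up_entry_def by (metis (mono_tags, lifting) LeastI)+
  show "\<And>w. w \<in> entries a S \<Longrightarrow> v < w \<Longrightarrow> up_entry a S v \<le> w"
    unfolding up_entry_def by (simp add: Least_le)
qed

lemma up_entry_unique:
  assumes "u \<in> entries a S" "v < u" "\<And>w. w \<in> entries a S \<Longrightarrow> v < w \<Longrightarrow> u \<le> w"
  shows "up_entry a S v = u"
  using up_entry[of a S v] assms by (meson antisym)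

lemma not_first_col_has_greater_entry:
  assumes S: "S \<in> ASSF a" and v: "v \<in> entries a S" and L: "leftmost_col a S v \<noteq> 1"
  shows "\<exists>u\<in>entries a S. v < u"
proof -
  obtain r c where rc: "(r, c) \<in> diag a" "S (r, c) = v" using v by (auto simp: entries_iff)
  have r1: "(r, 1) \<in> diag a" using diag_first_col[OF rc(1)] .
  have "r \<in> entries a S" using r1 ASSF_first_col[OF S r1] by (auto simp: entries_iff)
  moreover have "v \<le> r" using ASSF_le_row[OF S rc(1)] rc by simp
  moreover have "r \<noteq> v" using leftmost_col_eq_1_iff[OF S, of v] r1 L by auto
  ultimately show ?thesis by (intro bexI[of _ r]) auto
qed

lemma particle_highest_iff_not_raisable:
  assumes S: "S \<in> ASSF a"
  shows "particle_highest a S \<longleftrightarrow> (\<forall>v\<in>entries a S. \<not> raisable a S v)"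
proof -
  have "leftmost_col a S v = 1 \<or>
      (\<exists>u. u \<in> entries a S \<and> v < u \<and> (\<forall>w \<in> entries a S. v < w \<longrightarrow> u \<le> w) \<and>
        (\<exists>r c. (r, c) \<in> diag a \<and> S (r, c) = u \<and> c \<ge> leftmost_col a S v))
    \<longleftrightarrow> \<not> raisable a S v" if v: "v \<in> entries a S" for v
  proof (cases "leftmost_col a S v = 1")
    case False
    then have up: "\<exists>u\<in>entries a S. v < u" by (rule not_first_col_has_greater_entry[OF S v])
    have "(\<exists>u. u \<in> entries a S \<and> v < u \<and> (\<forall>w \<in> entries a S. v < w \<longrightarrow> u \<le> w) \<and>
        (\<exists>r c. (r, c) \<in> diag a \<and> S (r, c) = u \<and> c \<ge> leftmost_col a S v))
      \<longleftrightarrow> (\<exists>r c. (r, c) \<in> diag a \<and> S (r, c) = up_entry a S v \<and> c \<ge> leftmost_col a S v)"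
    proof
      assume "\<exists>u. u \<in> entries a S \<and> v < u \<and> (\<forall>w \<in> entries a S. v < w \<longrightarrow> u \<le> w) \<and>
        (\<exists>r c. (r, c) \<in> diag a \<and> S (r, c) = u \<and> c \<ge> leftmost_col a S v)"
      then obtain u where "u \<in> entries a S" "v < u" "\<forall>w \<in> entries a S. v < w \<longrightarrow> u \<le> w"
        and "\<exists>r c. (r, c) \<in> diag a \<and> S (r, c) = u \<and> c \<ge> leftmost_col a S v"
        by blast
      then show "\<exists>r c. (r, c) \<in> diag a \<and> S (r, c) = up_entry a S v \<and> c \<ge> leftmost_col a S v"
        using up_entry_unique[of u a S v] by auto
    qed (use up_entry[OF up] in blast)
    moreover have "raisable a S v \<longleftrightarrow>
        (\<forall>r c. (r, c) \<in> diag a \<and> S (r, c) = up_entry a S v \<longrightarrow> c < leftmost_col a S v)"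
      using False up v by (simp add: raisable_def)
    ultimately show ?thesis using False by (auto simp: not_less)
  next
    case True
    then show ?thesis by (simp add: raisable_def)
  qed
  then show ?thesis unfolding particle_highest_def by (rule ball_cong[OF HOL.refl])
qed

subsection \<open>Relabelling fillings along monotone maps\<close>

definition left_merging :: "nat list \<Rightarrow> filling \<Rightarrow> filling \<Rightarrow> bool" where
  "left_merging a S T \<longleftrightarrow> (\<forall>x\<in>diag a. \<forall>y\<in>diag a. T x = T y \<and> S x < S y \<longrightarrow> snd y < snd x)"

lemma left_mergingD:
  "left_merging a S T \<Longrightarrow> x \<in> diag a \<Longrightarrow> y \<in> diag a \<Longrightarrow> T x = T y \<Longrightarrow> S x < S y \<Longrightarrow> snd y < snd x"
  unfolding left_merging_def by blast

lemma inv_triple_mono_image: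
  fixes f :: "nat \<Rightarrow> nat"
  assumes "inv_triple b g c" "mono f" "g < b \<Longrightarrow> f g \<noteq> f b" "b < c \<Longrightarrow> f b \<noteq> f c"
  shows "inv_triple (f b) (f g) (f c)"
  using assms(1,3,4) monoD[OF \<open>mono f\<close>, of c g] monoD[OF \<open>mono f\<close>, of g b] monoD[OF \<open>mono f\<close>, of b c]
  unfolding inv_triple_def by (auto simp: le_less)

lemma inv_triple_of_mono_image:
  fixes f :: "nat \<Rightarrow> nat"
  assumes "inv_triple (f b) (f g) (f c)" "mono f" "c \<le> g"
  shows "inv_triple b g c"
  using assms(1,3) monoD[OF \<open>mono f\<close>, of b g] monoD[OF \<open>mono f\<close>, of c b]
  unfolding inv_triple_def by (meson not_le)

lemma all_triples_inv_relabel: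
  assumes S: "all_triples_inv a S" and f: "mono f"
    and T: "\<And>x. x \<in> diag a \<Longrightarrow> T x = f (S x)" and merge: "left_merging a S T"
  shows "all_triples_inv a T"
proof -
  have distinct: "f (S x) \<noteq> f (S y)" if "x \<in> diag a" "y \<in> diag a" "S x < S y" "snd x \<le> snd y" for x y
    using left_mergingD[OF merge that(1,2)] that T[OF that(1)] T[OF that(2)] by auto
  show ?thesis
    unfolding all_triples_inv_def
  proof (intro conjI allI impI)
    fix r s c assume h: "r < s \<and> rowlen a r \<ge> rowlen a s \<and>
      (r, c) \<in> diag a \<and> (r, c + 1) \<in> diag a \<and> (s, c + 1) \<in> diag a"
    then have "inv_triple (S (s, c + 1)) (S (r, c)) (S (r, c + 1))"
      using S unfolding all_triples_inv_def by blast
    then have "inv_triple (f (S (s, c + 1))) (f (S (r, c))) (f (S (r, c + 1)))"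
      by (rule inv_triple_mono_image[OF _ f]) (use h distinct in auto)
    then show "inv_triple (T (s, c + 1)) (T (r, c)) (T (r, c + 1))" using h T by simp
  next
    fix r s c assume h: "r < s \<and> rowlen a s > rowlen a r \<and>
      (s, c) \<in> diag a \<and> (s, c + 1) \<in> diag a \<and> (r, c) \<in> diag a"
    then have "inv_triple (S (r, c)) (S (s, c)) (S (s, c + 1))"
      using S unfolding all_triples_inv_def by blast
    then have "inv_triple (f (S (r, c))) (f (S (s, c))) (f (S (s, c + 1)))"
      by (rule inv_triple_mono_image[OF _ f]) (use h distinct in auto)
    then show "inv_triple (T (r, c)) (T (s, c)) (T (s, c + 1))" using h T by simp
  qed
qed

lemma all_triples_inv_unrelabel:
  assumes T: "all_triples_inv a T" and f: "mono f"
    and TS: "\<And>x. x \<in> diag a \<Longrightarrow> T x = f (S x)"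
    and rows: "\<And>i c. (i, c) \<in> diag a \<Longrightarrow> (i, c + 1) \<in> diag a \<Longrightarrow> S (i, c + 1) \<le> S (i, c)"
  shows "all_triples_inv a S"
  unfolding all_triples_inv_def
proof (intro conjI allI impI)
  fix r s c assume h: "r < s \<and> rowlen a r \<ge> rowlen a s \<and>
    (r, c) \<in> diag a \<and> (r, c + 1) \<in> diag a \<and> (s, c + 1) \<in> diag a"
  then have "inv_triple (T (s, c + 1)) (T (r, c)) (T (r, c + 1))"
    using T unfolding all_triples_inv_def by blast
  then have "inv_triple (f (S (s, c + 1))) (f (S (r, c))) (f (S (r, c + 1)))"
    using h by (simp add: TS)
  then show "inv_triple (S (s, c + 1)) (S (r, c)) (S (r, c + 1))"
    using h by (blast intro: inv_triple_of_mono_image[OF _ f rows])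
next
  fix r s c assume h: "r < s \<and> rowlen a s > rowlen a r \<and>
    (s, c) \<in> diag a \<and> (s, c + 1) \<in> diag a \<and> (r, c) \<in> diag a"
  then have "inv_triple (T (r, c)) (T (s, c)) (T (s, c + 1))"
    using T unfolding all_triples_inv_def by blast
  then have "inv_triple (f (S (r, c))) (f (S (s, c))) (f (S (s, c + 1)))"
    using h by (simp add: TS)
  then show "inv_triple (S (r, c)) (S (s, c)) (S (s, c + 1))"
    using h by (blast intro: inv_triple_of_mono_image[OF _ f rows])
qed

lemma ASSF_relabel:
  assumes S: "S \<in> ASSF a" and f: "mono f"
    and TS: "\<And>x. x \<in> diag a \<Longrightarrow> T x = f (S x)" and out: "\<And>x. x \<notin> diag a \<Longrightarrow> T x = 0"
    and pos: "\<And>x. x \<in> diag a \<Longrightarrow> 0 < T x" and first: "\<And>i. (i, 1) \<in> diag a \<Longrightarrow> T (i, 1) = i"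
    and merge: "left_merging a S T"
  shows "T \<in> ASSF a"
  unfolding ASSF_def
proof (intro CollectI conjI allI impI ballI)
  show "all_triples_inv a T"
    using all_triples_inv_relabel[OF _ f TS merge] S by (simp add: ASSF_def)
  fix i c assume "(i, c) \<in> diag a \<and> (i, c + 1) \<in> diag a"
  then show "T (i, c) \<ge> T (i, c + 1)"
    using TS monoD[OF f] ASSF_row_decreasing[OF S] by simp
next
  fix i j c assume h: "(i, c) \<in> diag a \<and> (j, c) \<in> diag a \<and> i \<noteq> j"
  then have "S (i, c) \<noteq> S (j, c)" using ASSF_col_distinct[OF S] by blast
  then show "T (i, c) \<noteq> T (j, c)"
    using h left_mergingD[OF merge, of "(i, c)" "(j, c)"] left_mergingD[OF merge, of "(j, c)" "(i, c)"]
    by (force simp: neq_iff)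
qed (use out pos first in auto)

lemma ASSF_unrelabel:
  assumes T: "T \<in> ASSF a" and f: "mono f"
    and TS: "\<And>x. x \<in> diag a \<Longrightarrow> T x = f (S x)" and out: "\<And>x. x \<notin> diag a \<Longrightarrow> S x = 0"
    and pos: "\<And>x. x \<in> diag a \<Longrightarrow> 0 < S x" and first: "\<And>i. (i, 1) \<in> diag a \<Longrightarrow> S (i, 1) = i"
    and merge: "left_merging a S T"
  shows "S \<in> ASSF a"
proof -
  have rows: "S (i, c + 1) \<le> S (i, c)" if h: "(i, c) \<in> diag a" "(i, c + 1) \<in> diag a" for i c
  proof (rule ccontr)
    assume "\<not> S (i, c + 1) \<le> S (i, c)"
    moreover from this have "T (i, c) \<le> T (i, c + 1)" using TS h monoD[OF f] by simp
    then have "T (i, c) = T (i, c + 1)" using ASSF_row_decreasing[OF T h] by simp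
    ultimately show False using left_mergingD[OF merge h] by simp
  qed
  show ?thesis
    unfolding ASSF_def
  proof (intro CollectI conjI allI impI ballI)
    show "all_triples_inv a S"
      using all_triples_inv_unrelabel[OF _ f TS rows] T by (simp add: ASSF_def)
    fix i j c assume "(i, c) \<in> diag a \<and> (j, c) \<in> diag a \<and> i \<noteq> j"
    then show "S (i, c) \<noteq> S (j, c)" using ASSF_col_distinct[OF T, of i c j] TS by auto
  qed (use out pos first rows in auto)
qed

subsection \<open>Raising entries\<close>

definition ceil_in :: "nat set \<Rightarrow> nat \<Rightarrow> nat" where
  "ceil_in Q v = (if \<exists>q\<in>Q. v \<le> q then LEAST q. q \<in> Q \<and> v \<le> q else v)"

lemma ceil_in:
  assumes "\<exists>q\<in>Q. v \<le> q"
  shows "ceil_in Q v \<in> Q" "v \<le> ceil_in Q v" "\<And>q. q \<in> Q \<Longrightarrow> v \<le> q \<Longrightarrow> ceil_in Q v \<le> q"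
proof -
  from assms obtain q where "q \<in> Q \<and> v \<le> q" by blast
  then show "ceil_in Q v \<in> Q" "v \<le> ceil_in Q v"
    unfolding ceil_in_def using assms by (metis (mono_tags, lifting) LeastI)+
  show "\<And>q. q \<in> Q \<Longrightarrow> v \<le> q \<Longrightarrow> ceil_in Q v \<le> q"
    unfolding ceil_in_def using assms by (simp add: Least_le)
qed

lemma ceil_in_self: "v \<in> Q \<Longrightarrow> ceil_in Q v = v"
  using ceil_in[of Q v] by force

lemma mono_ceil_in: "mono (ceil_in Q)"
proof (rule monoI)
  fix v w :: nat assume vw: "v \<le> w"
  show "ceil_in Q v \<le> ceil_in Q w"
  proof (cases "\<exists>q\<in>Q. w \<le> q")
    case True
    then show ?thesis using ceil_in[OF True] ceil_in(3)[of Q v] vw by force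
  next
    case False
    then have w: "ceil_in Q w = w" unfolding ceil_in_def by simp
    show ?thesis
    proof (cases "\<exists>q\<in>Q. v \<le> q")
      case True
      then show ?thesis using ceil_in(1)[OF True] False w by force
    next
      case False
      then show ?thesis using w vw unfolding ceil_in_def by simp
    qed
  qed
qed

lemma ceil_in_Suc:
  assumes "v \<notin> Q" "\<exists>q\<in>Q. Suc v \<le> q"
  shows "ceil_in Q (Suc v) = ceil_in Q v"
proof -
  have "(\<lambda>q. q \<in> Q \<and> v \<le> q) = (\<lambda>q. q \<in> Q \<and> Suc v \<le> q)"
    using assms(1) by (auto simp: le_eq_less_or_eq)
  then show ?thesis using assms(2) unfolding ceil_in_def by (metis Suc_leD)
qed

definition raises_to :: "nat list \<Rightarrow> filling \<Rightarrow> filling \<Rightarrow> bool" where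
  "raises_to a S T \<longleftrightarrow> (\<forall>x. x \<notin> diag a \<longrightarrow> T x = 0) \<and> entries a T \<subseteq> entries a S \<and>
     (\<forall>v\<in>entries a S. \<exists>q\<in>entries a T. v \<le> q) \<and>
     (\<forall>x\<in>diag a. T x = ceil_in (entries a T) (S x)) \<and> left_merging a S T"

lemma raises_to_outside: "raises_to a S T \<Longrightarrow> x \<notin> diag a \<Longrightarrow> T x = 0"
  unfolding raises_to_def by blast

lemma raises_to_entries: "raises_to a S T \<Longrightarrow> entries a T \<subseteq> entries a S"
  unfolding raises_to_def by blast

lemma raises_to_bounded: "raises_to a S T \<Longrightarrow> v \<in> entries a S \<Longrightarrow> \<exists>q\<in>entries a T. v \<le> q"
  unfolding raises_to_def by blast

lemma raises_to_ceil: "raises_to a S T \<Longrightarrow> x \<in> diag a \<Longrightarrow> T x = ceil_in (entries a T) (S x)"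
  unfolding raises_to_def by blast

lemma raises_to_left_merging: "raises_to a S T \<Longrightarrow> left_merging a S T"
  unfolding raises_to_def by blast

lemma raises_to_ge:
  assumes "raises_to a S T" "x \<in> diag a"
  shows "S x \<le> T x"
  using ceil_in(2)[OF raises_to_bounded[OF assms(1)], of "S x"] raises_to_ceil[OF assms]
  by (simp add: assms(2) entries_def)

lemma raises_to_refl:
  assumes "S \<in> ASSF a"
  shows "raises_to a S S"
  unfolding raises_to_def left_merging_def
  using ASSF_outside[OF assms] ceil_in_self[of _ "entries a S"] by (auto simp: entries_def)

lemma raises_to_leftmost_col:
  assumes rel: "raises_to a S T" and t: "t \<in> entries a T"
  shows "leftmost_col a T t = leftmost_col a S t"
proof -
  have tS: "t \<in> entries a S" using raises_to_entries[OF rel] t by blast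
  have T_eq: "T x = t" if "x \<in> diag a" "S x = t" for x
    using raises_to_ceil[OF rel that(1)] that(2) ceil_in_self[OF t] by simp
  have S_le: "S x \<le> t" if "x \<in> diag a" "T x = t" for x
    using raises_to_ge[OF rel that(1)] that(2) by simp
  obtain r where r: "(r, leftmost_col a S t) \<in> diag a" "S (r, leftmost_col a S t) = t"
    using leftmost_col_attained[OF tS] by blast
  obtain r' where r': "(r', leftmost_col a T t) \<in> diag a" "T (r', leftmost_col a T t) = t"
    using leftmost_col_attained[OF t] by blast
  have "leftmost_col a T t \<le> leftmost_col a S t"
    using leftmost_col_le[OF r(1)] T_eq[OF r] by blast
  moreover have "leftmost_col a S t \<le> leftmost_col a T t"
  proof (cases "S (r', leftmost_col a T t) = t")
    case True
    then show ?thesis using leftmost_col_le[OF r'(1)] by blast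
  next
    case False
    then have "S (r', leftmost_col a T t) < S (r, leftmost_col a S t)" using r(2) S_le[OF r'] by simp
    then show ?thesis
      using left_mergingD[OF raises_to_left_merging[OF rel] r'(1) r(1)] r'(2) T_eq[OF r] by simp
  qed
  ultimately show ?thesis by simp
qed

lemma raises_to_up_entry:
  assumes rel: "raises_to a S T" and v: "v \<in> entries a T" and up: "\<exists>u\<in>entries a T. v < u"
  shows "\<exists>u\<in>entries a S. v < u" "up_entry a T v = ceil_in (entries a T) (up_entry a S v)"
proof -
  note sub = raises_to_entries[OF rel]
  show upS: "\<exists>u\<in>entries a S. v < u" using up sub by blast
  let ?w = "up_entry a S v"
  have w: "?w \<in> entries a S" "v < ?w" using up_entry[OF upS] by auto
  note cw = ceil_in[OF raises_to_bounded[OF rel w(1)]]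
  show "up_entry a T v = ceil_in (entries a T) ?w"
  proof (rule antisym)
    show "up_entry a T v \<le> ceil_in (entries a T) ?w"
      using up_entry(3)[OF up] cw(1,2) w(2) by simp
    have "up_entry a T v \<in> entries a S" "v < up_entry a T v" using up_entry[OF up] sub by auto
    then show "ceil_in (entries a T) ?w \<le> up_entry a T v"
      using cw(3) up_entry(1)[OF up] up_entry(3)[OF upS] by blast
  qed
qed

lemma raisable_run_left:
  assumes "v < u" "u \<in> entries a S" "\<forall>w\<in>entries a S. v \<le> w \<and> w < u \<longrightarrow> raisable a S w"
    and "(r, c) \<in> diag a" "S (r, c) = v" "(r', c') \<in> diag a" "S (r', c') = u"
  shows "c' < c"
  using assms
proof (induction "u - v" arbitrary: v r c rule: less_induct)
  case less
  have "v \<in> entries a S" using less.prems(4,5) by (auto simp: entries_iff)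
  then have d: "raisable a S v" using less.prems(1,3) by simp
  then have up: "\<exists>u\<in>entries a S. v < u" by (simp add: raisable_def)
  let ?w = "up_entry a S v"
  have w: "?w \<in> entries a S" "v < ?w" "?w \<le> u" using up_entry[OF up] less.prems(1,2) by auto
  have lc: "leftmost_col a S v \<le> c" using leftmost_col_le less.prems(4,5) by blast
  have wl: "c'' < leftmost_col a S v" if "(r'', c'') \<in> diag a" "S (r'', c'') = ?w" for r'' c''
    using d that unfolding raisable_def by blast
  show ?case
  proof (cases "?w = u")
    case True
    then show ?thesis using wl[OF less.prems(6)] less.prems(7) lc by simp
  next
    case False
    obtain r2 c2 where rc2: "(r2, c2) \<in> diag a" "S (r2, c2) = ?w" using w(1) by (auto simp: entries_iff)
    have "c' < c2"
      by (rule less.hyps[of ?w r2 c2]) (use w False less.prems rc2 in auto)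
    then show ?thesis using wl[OF rc2] lc by simp
  qed
qed

definition fixed_entries :: "nat list \<Rightarrow> filling \<Rightarrow> nat set" where
  "fixed_entries a S = {u \<in> entries a S. \<not> raisable a S u}"

definition raise_all :: "nat list \<Rightarrow> filling \<Rightarrow> filling" where
  "raise_all a S = (\<lambda>x. if x \<in> diag a then ceil_in (fixed_entries a S) (S x) else 0)"

lemma fixed_entry_above:
  assumes v: "v \<in> entries a S"
  shows "\<exists>q\<in>fixed_entries a S. v \<le> q"
proof -
  have fin: "finite (entries a S)" by (rule finite_entries)
  then have "Max (entries a S) \<in> entries a S" using v by (intro Max_in) auto
  with fin have "Max (entries a S) \<in> fixed_entries a S"
    by (auto simp: fixed_entries_def raisable_def not_less)
  then show ?thesis using v fin by (intro bexI) auto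
qed

lemma entries_raise_all: "entries a (raise_all a S) = fixed_entries a S"
proof
  show "entries a (raise_all a S) \<subseteq> fixed_entries a S"
    using ceil_in(1)[OF fixed_entry_above] by (auto simp: entries_def raise_all_def)
  show "fixed_entries a S \<subseteq> entries a (raise_all a S)"
  proof
    fix u assume u: "u \<in> fixed_entries a S"
    then obtain x where "x \<in> diag a" "S x = u" by (auto simp: fixed_entries_def entries_def)
    then show "u \<in> entries a (raise_all a S)"
      using ceil_in_self[OF u] by (auto simp: entries_def raise_all_def intro!: image_eqI[of _ _ x])
  qed
qed

lemma left_merging_raise_all: "left_merging a S (raise_all a S)"
  unfolding left_merging_def
proof (intro ballI impI)
  fix x y assume x: "x \<in> diag a" and y: "y \<in> diag a"
    and h: "raise_all a S x = raise_all a S y \<and> S x < S y"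
  let ?Q = "fixed_entries a S"
  have Sx: "S x \<in> entries a S" and Sy: "S y \<in> entries a S" using x y by (auto simp: entries_def)
  have "raisable a S w" if "w \<in> entries a S" "S x \<le> w" "w < S y" for w
  proof (rule ccontr)
    assume "\<not> raisable a S w"
    then have "ceil_in ?Q (S x) \<le> w" using ceil_in(3)[OF fixed_entry_above[OF Sx]] that
      by (simp add: fixed_entries_def)
    then show False
      using h x y ceil_in(2)[OF fixed_entry_above[OF Sy]] \<open>w < S y\<close> by (simp add: raise_all_def)
  qed
  then show "snd y < snd x"
    using raisable_run_left[of "S x" "S y" a S "fst x" "snd x" "fst y" "snd y"] h Sy x y by simp
qed

lemma ASSF_raise_all:
  assumes S: "S \<in> ASSF a"
  shows "raise_all a S \<in> ASSF a"
proof (rule ASSF_relabel[OF S mono_ceil_in])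
  show "raise_all a S (i, 1) = i" if "(i, 1) \<in> diag a" for i
  proof -
    have "i \<in> fixed_entries a S"
      using leftmost_col_eq_1_iff[OF S, of i] that by (simp add: fixed_entries_def raisable_def)
    then show ?thesis using that ASSF_first_col[OF S that] by (simp add: raise_all_def ceil_in_self)
  qed
  show "0 < raise_all a S x" if "x \<in> diag a" for x
    using ceil_in(2)[OF fixed_entry_above, of "S x" a S] ASSF_pos[OF S that] that
    by (fastforce simp: raise_all_def entries_def)
  show "left_merging a S (raise_all a S)" by (rule left_merging_raise_all)
qed (simp_all add: raise_all_def)

lemma raises_to_raise_all: "raises_to a S (raise_all a S)"
  unfolding raises_to_def entries_raise_all
proof (intro conjI ballI allI impI left_merging_raise_all)
  show "fixed_entries a S \<subseteq> entries a S" by (auto simp: fixed_entries_def)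
qed (auto simp: raise_all_def fixed_entry_above)

lemma HSSF_raise_all:
  assumes S: "S \<in> ASSF a"
  shows "raise_all a S \<in> HSSF a"
proof -
  let ?T = "raise_all a S"
  note rel = raises_to_raise_all[of a S]
  have "\<not> raisable a ?T v" if v: "v \<in> entries a ?T" for v
  proof
    assume dT: "raisable a ?T v"
    then have upT: "\<exists>u\<in>entries a ?T. v < u" and L: "leftmost_col a ?T v \<noteq> 1"
      by (auto simp: raisable_def)
    note up = raises_to_up_entry[OF rel v upT]
    have "\<not> raisable a S v" using v by (simp add: entries_raise_all fixed_entries_def)
    with up(1) L obtain r c where rc: "(r, c) \<in> diag a" "S (r, c) = up_entry a S v"
        "leftmost_col a S v \<le> c"
      using v raises_to_leftmost_col[OF rel v] raises_to_entries[OF rel]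
      unfolding raisable_def by (auto simp: not_less)
    have "?T (r, c) = up_entry a ?T v"
      using rc up(2) raises_to_ceil[OF rel rc(1)] by simp
    then have "c < leftmost_col a ?T v" using dT rc(1) unfolding raisable_def by blast
    then show False using raises_to_leftmost_col[OF rel v] rc(3) by simp
  qed
  then show ?thesis
    using ASSF_raise_all[OF S] particle_highest_iff_not_raisable[OF ASSF_raise_all[OF S]]
    by (simp add: HSSF_def)
qed

lemma raises_to_unfixed_raisable:
  assumes S: "S \<in> ASSF a" and T: "T \<in> ASSF a" and rel: "raises_to a S T"
    and u: "u \<in> entries a S" "u \<notin> entries a T"
  shows "raisable a S u"
proof -
  let ?g = "ceil_in (entries a T)"
  note sub = raises_to_entries[OF rel]
  have gu: "?g u \<in> entries a T" "u < ?g u"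
    using ceil_in(1,2)[OF raises_to_bounded[OF rel u(1)]] u(2) by (auto simp: le_less)
  then have up: "\<exists>w\<in>entries a S. u < w" using sub by blast
  let ?w = "up_entry a S u"
  have w: "?w \<in> entries a S" "u < ?w" "?w \<le> ?g u" using up_entry[OF up] gu sub by auto
  have gw: "?g ?w = ?g u"
    using ceil_in(3)[OF raises_to_bounded[OF rel w(1)] gu(1) w(3)] monoD[OF mono_ceil_in[of "entries a T"], of u ?w] w(2)
    by simp
  have L: "leftmost_col a S u \<noteq> 1"
    using leftmost_col_eq_1_iff[OF S, of u] leftmost_col_eq_1_iff[OF T, of u] u by blast
  obtain r0 where r0: "(r0, leftmost_col a S u) \<in> diag a" "S (r0, leftmost_col a S u) = u"
    using leftmost_col_attained[OF u(1)] by blast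
  have "c < leftmost_col a S u" if rc: "(r, c) \<in> diag a" "S (r, c) = ?w" for r c
  proof -
    have "T (r, c) = T (r0, leftmost_col a S u)"
      using raises_to_ceil[OF rel rc(1)] raises_to_ceil[OF rel r0(1)] rc(2) r0(2) gw by simp
    then show ?thesis
      using left_mergingD[OF raises_to_left_merging[OF rel] r0(1) rc(1)] rc(2) r0(2) w(2) by simp
  qed
  then show ?thesis using u(1) L up unfolding raisable_def by blast
qed

lemma raises_to_HSSF_not_raisable:
  assumes T: "T \<in> HSSF a" and rel: "raises_to a S T" and u: "u \<in> entries a T"
  shows "\<not> raisable a S u"
proof
  assume d: "raisable a S u"
  let ?g = "ceil_in (entries a T)"
  have TA: "T \<in> ASSF a" using T by (simp add: HSSF_def)
  note LL = raises_to_leftmost_col[OF rel u]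
  have upS: "\<exists>w\<in>entries a S. u < w" and L: "leftmost_col a S u \<noteq> 1"
    using d by (auto simp: raisable_def)
  let ?w = "up_entry a S u"
  have w: "?w \<in> entries a S" "u < ?w" using up_entry[OF upS] by auto
  have left: "c < leftmost_col a S u" if "(r, c) \<in> diag a" "S (r, c) = ?w" for r c
    using d that unfolding raisable_def by blast
  have gw: "?g ?w \<in> entries a T" "?w \<le> ?g ?w" using ceil_in[OF raises_to_bounded[OF rel w(1)]] by auto
  then have upT: "\<exists>v\<in>entries a T. u < v" using w(2) by (meson less_le_trans)
  have "\<not> raisable a T u"
    using T u particle_highest_iff_not_raisable[OF TA] by (simp add: HSSF_def)
  then obtain r c where rc: "(r, c) \<in> diag a" "T (r, c) = up_entry a T u" "leftmost_col a S u \<le> c"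
    using L LL upT u unfolding raisable_def by (auto simp: not_less)
  let ?s = "S (r, c)"
  have gs: "?g ?s = ?g ?w"
    using raises_to_ceil[OF rel rc(1)] rc(2) raises_to_up_entry(2)[OF rel u upT] by simp
  have "u < ?s"
  proof (rule ccontr)
    assume "\<not> u < ?s"
    then have "?g ?s \<le> ?g u" using monoD[OF mono_ceil_in] by simp
    then show False using gs ceil_in_self[OF u] gw(2) w(2) by simp
  qed
  then have sw: "?w \<le> ?s" using up_entry(3)[OF upS] rc(1) by (auto simp: entries_def)
  show False
  proof (cases "?s = ?w")
    case True
    then show False using left[OF rc(1)] rc(3) by simp
  next
    case False
    obtain r2 c2 where rc2: "(r2, c2) \<in> diag a" "S (r2, c2) = ?w" using w(1) by (auto simp: entries_iff)
    have "T (r2, c2) = T (r, c)"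
      using raises_to_ceil[OF rel rc2(1)] raises_to_ceil[OF rel rc(1)] rc2(2) gs by simp
    then have "c < c2"
      using left_mergingD[OF raises_to_left_merging[OF rel] rc2(1) rc(1)] rc2(2) sw False by simp
    then show False using left[OF rc2] rc(3) by simp
  qed
qed

lemma raises_to_HSSF_eq_raise_all:
  assumes S: "S \<in> ASSF a" and T: "T \<in> HSSF a" and rel: "raises_to a S T"
  shows "T = raise_all a S"
proof
  have TA: "T \<in> ASSF a" using T by (simp add: HSSF_def)
  have "entries a T = fixed_entries a S"
    using raises_to_unfixed_raisable[OF S TA rel] raises_to_HSSF_not_raisable[OF T rel]
      raises_to_entries[OF rel]
    unfolding fixed_entries_def by blast
  then show "T x = raise_all a S x" for x
    using raises_to_outside[OF rel, of x] raises_to_ceil[OF rel, of x] by (simp add: raise_all_def)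
qed

subsection \<open>Weights and fixed slides\<close>

definition entry_count :: "nat list \<Rightarrow> filling \<Rightarrow> nat \<Rightarrow> nat" where
  "entry_count a S u = card {x \<in> diag a. S x = u}"

lemma length_wt [simp]: "length (wt a S) = length a"
  by (simp add: wt_def del: upt_Suc)

lemma nth_wt: "k < length a \<Longrightarrow> wt a S ! k = entry_count a S (Suc k)"
  by (simp add: wt_def entry_count_def del: upt_Suc)

lemma wt_cong:
  assumes "\<And>x. x \<in> diag a \<Longrightarrow> S x = T x"
  shows "wt a S = wt a T"
proof -
  have "{x \<in> diag a. S x = i} = {x \<in> diag a. T x = i}" for i using assms by auto
  then show ?thesis by (simp add: wt_def)
qed

lemma entry_count_pos_iff: "0 < entry_count a S u \<longleftrightarrow> u \<in> entries a S"
  using finite_diag[of a] by (auto simp: entry_count_def entries_def card_gt_0_iff)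

definition merge_up :: "nat \<Rightarrow> filling \<Rightarrow> filling" where
  "merge_up v R = (\<lambda>x. if R x = v then Suc v else R x)"

lemma mono_merge_up_value: "mono (\<lambda>u :: nat. if u = v then Suc v else u)"
  by (rule monoI) auto

lemma entry_count_merge_up:
  "entry_count a (merge_up v R) u =
    (if u = v then 0
     else if u = Suc v then entry_count a R v + entry_count a R (Suc v)
     else entry_count a R u)"
proof -
  have "{x \<in> diag a. merge_up v R x = Suc v} = {x \<in> diag a. R x = v} \<union> {x \<in> diag a. R x = Suc v}"
    by (auto simp: merge_up_def)
  then have "entry_count a (merge_up v R) (Suc v) = entry_count a R v + entry_count a R (Suc v)"
    unfolding entry_count_def using finite_diag[of a] by (simp add: card_Un_disjoint disjoint_iff)
  moreover have "{x \<in> diag a. merge_up v R x = u} = {x \<in> diag a. R x = u}" if "u \<noteq> v" "u \<noteq> Suc v"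
    using that by (auto simp: merge_up_def)
  then have "entry_count a (merge_up v R) u = entry_count a R u" if "u \<noteq> v" "u \<noteq> Suc v"
    using that by (simp add: entry_count_def)
  moreover have "{x \<in> diag a. merge_up v R x = v} = {}" by (auto simp: merge_up_def)
  then have "entry_count a (merge_up v R) v = 0" by (metis card.empty entry_count_def)
  ultimately show ?thesis by simp
qed

lemma wt_merge_up:
  assumes "0 < v" "v < length a"
  shows "wt a R = (wt a (merge_up v R))[v - 1 := entry_count a R v, v := entry_count a R (Suc v)]"
proof (rule nth_equalityI)
  fix k assume "k < length (wt a R)"
  then show "wt a R ! k = (wt a (merge_up v R))[v - 1 := entry_count a R v, v := entry_count a R (Suc v)] ! k"
    using assms by (cases "k = v - 1 \<or> k = v") (auto simp: nth_wt entry_count_merge_up)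
qed simp

text \<open>Merging the entries \<open>v\<close> into \<open>v + 1\<close> undoes a local move at positions \<open>v - 1, v\<close>
  of the weight (0-indexed), which splits the entries \<open>v + 1\<close> into entries \<open>v\<close> and \<open>v + 1\<close>.\<close>

lemma fixed_slide_merge_up:
  assumes slide: "fixed_slide b (wt a (merge_up v R))" and v: "0 < v" "v < length a"
    and keep: "b ! v \<noteq> 0 \<Longrightarrow> Suc v \<in> entries a R"
  shows "fixed_slide b (wt a R)"
proof -
  have "fixed_slide b ((wt a (merge_up v R))[v - 1 := entry_count a R v,
      Suc (v - 1) := entry_count a R (Suc v)])"
  proof (rule fixed_slide.move[OF slide])
    show "b ! Suc (v - 1) \<noteq> 0 \<longrightarrow> 0 < entry_count a R (Suc v)"
      using keep v(1) entry_count_pos_iff by simp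
  qed (use v in \<open>simp_all add: nth_wt entry_count_merge_up\<close>)
  then show ?thesis using wt_merge_up[OF v, of R] v(1) by simp
qed

lemma raises_to_left_merging_merge_up:
  assumes rel: "raises_to a R T" and v: "v \<notin> entries a T"
  shows "left_merging a R (merge_up v R)"
  unfolding left_merging_def
proof (intro ballI impI)
  fix x y assume x: "x \<in> diag a" and y: "y \<in> diag a"
    and h: "merge_up v R x = merge_up v R y \<and> R x < R y"
  then have xy: "R x = v" "R y = Suc v" by (auto simp: merge_up_def split: if_splits)
  have "Suc v \<in> entries a R" using imageI[OF y, of R] xy(2) by (simp add: entries_def)
  then have "ceil_in (entries a T) (Suc v) = ceil_in (entries a T) v"
    using raises_to_bounded[OF rel] v by (intro ceil_in_Suc) auto
  then have "T x = T y" using raises_to_ceil[OF rel x] raises_to_ceil[OF rel y] xy by simp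
  then show "snd y < snd x" using left_mergingD[OF raises_to_left_merging[OF rel] x y] h by simp
qed

lemma raises_to_merge_up:
  assumes rel: "raises_to a R T" and v: "v \<in> entries a R" "v \<notin> entries a T"
  shows "raises_to a (merge_up v R) T"
proof -
  let ?R' = "merge_up v R" and ?g = "ceil_in (entries a T)"
  have gv: "?g v \<in> entries a T" "v < ?g v"
    using ceil_in(1,2)[OF raises_to_bounded[OF rel v(1)]] v(2) by (auto simp: le_less)
  have "\<exists>q\<in>entries a T. Suc v \<le> q" using gv by (intro bexI[of _ "?g v"]) auto
  then have gSuc: "?g (Suc v) = ?g v" by (rule ceil_in_Suc[OF v(2)])
  have "entries a T \<subseteq> entries a ?R'"
  proof
    fix q assume q: "q \<in> entries a T"
    then obtain x where "x \<in> diag a" "R x = q"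
      using raises_to_entries[OF rel] by (auto simp: entries_def)
    moreover have "q \<noteq> v" using q v(2) by blast
    ultimately show "q \<in> entries a ?R'" by (auto simp: entries_def merge_up_def)
  qed
  moreover have "\<exists>q\<in>entries a T. u \<le> q" if u: "u \<in> entries a ?R'" for u
  proof -
    obtain x where x: "x \<in> diag a" "u = ?R' x" using u unfolding entries_def by blast
    have Rx: "R x \<in> entries a R" using x(1) by (simp add: entries_def)
    show ?thesis
    proof (cases "R x = v")
      case True
      then show ?thesis using x(2) gv by (intro bexI[of _ "?g v"]) (auto simp: merge_up_def)
    next
      case False
      then show ?thesis using x(2) raises_to_bounded[OF rel Rx] by (simp add: merge_up_def)
    qed
  qed
  moreover have "T x = ?g (?R' x)" if "x \<in> diag a" for x
    using raises_to_ceil[OF rel that] gSuc by (simp add: merge_up_def)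
  moreover have "left_merging a ?R' T"
    using raises_to_left_merging[OF rel]
    unfolding left_merging_def by (auto simp: merge_up_def split: if_splits)
  ultimately show ?thesis using raises_to_outside[OF rel] unfolding raises_to_def by blast
qed

lemma left_merging_of_merge_up:
  assumes merge_T: "left_merging a (merge_up v R) T" and merge: "left_merging a R (merge_up v R)"
  shows "left_merging a R T"
  unfolding left_merging_def
proof (intro ballI impI)
  fix x y assume x: "x \<in> diag a" and y: "y \<in> diag a" and h: "T x = T y \<and> R x < R y"
  show "snd y < snd x"
  proof (cases "merge_up v R x < merge_up v R y")
    case True
    then show ?thesis using left_mergingD[OF merge_T x y] h by simp
  next
    case False
    then have "merge_up v R x = merge_up v R y"
      using monoD[OF mono_merge_up_value, of "R x" "R y" v] h by (simp add: merge_up_def)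
    then show ?thesis using left_mergingD[OF merge x y] h by simp
  qed
qed

lemma raises_to_of_merge_up:
  assumes rel: "raises_to a (merge_up v R) T" and v: "v \<notin> entries a T"
    and merge: "left_merging a R (merge_up v R)"
    and keep: "Suc v \<in> entries a T \<Longrightarrow> Suc v \<in> entries a R"
  shows "raises_to a R T"
proof -
  let ?S = "merge_up v R" and ?g = "ceil_in (entries a T)"
  have le: "R x \<le> ?S x" for x by (simp add: merge_up_def)
  have "entries a T \<subseteq> entries a R"
  proof
    fix q assume q: "q \<in> entries a T"
    then obtain x where x: "x \<in> diag a" "?S x = q"
      using raises_to_entries[OF rel] by (auto simp: entries_def)
    show "q \<in> entries a R"
    proof (cases "R x = v")
      case True
      then show ?thesis using x keep q by (simp add: merge_up_def)
    next
      case False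
      then show ?thesis using x by (auto simp: entries_def merge_up_def)
    qed
  qed
  moreover have "\<exists>q\<in>entries a T. u \<le> q" if u: "u \<in> entries a R" for u
  proof -
    obtain x where x: "x \<in> diag a" "u = R x" using u unfolding entries_def by blast
    then have "?S x \<in> entries a ?S" by (simp add: entries_def)
    then show ?thesis using raises_to_bounded[OF rel] le[of x] x(2) by (meson le_trans)
  qed
  moreover have "T x = ?g (R x)" if x: "x \<in> diag a" for x
  proof (cases "R x = v")
    case True
    have "\<exists>q\<in>entries a T. Suc v \<le> q"
      using raises_to_bounded[OF rel, of "Suc v"] x True by (force simp: entries_def merge_up_def)
    then show ?thesis
      using raises_to_ceil[OF rel x] ceil_in_Suc[OF v] True by (simp add: merge_up_def)
  qed (use raises_to_ceil[OF rel x] in \<open>simp add: merge_up_def\<close>)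
  moreover have "left_merging a R T"
    by (rule left_merging_of_merge_up[OF raises_to_left_merging[OF rel] merge])
  ultimately show ?thesis using raises_to_outside[OF rel] unfolding raises_to_def by blast
qed

lemma ASSF_merge_up:
  assumes R: "R \<in> ASSF a" and v: "0 < v" "(v, 1) \<notin> diag a"
    and merge: "left_merging a R (merge_up v R)"
  shows "merge_up v R \<in> ASSF a"
proof (rule ASSF_relabel[OF R mono_merge_up_value[of v]])
  show "merge_up v R (i, 1) = i" if "(i, 1) \<in> diag a" for i
    using that v(2) ASSF_first_col[OF R that] by (auto simp: merge_up_def)
  show "left_merging a R (merge_up v R)" by (rule merge)
qed (use ASSF_outside[OF R] ASSF_pos[OF R] v(1) in \<open>auto simp: merge_up_def\<close>)

lemma raises_to_fixed_slide:
  assumes "S \<in> ASSF a" and T: "T \<in> ASSF a" and "raises_to a S T"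
  shows "fixed_slide (wt a T) (wt a S)"
  using assms(1,3)
proof (induction "\<Sum>x\<in>diag a. T x - S x" arbitrary: S rule: less_induct)
  case less
  note S = less.prems(1) and rel = less.prems(2)
  show ?case
  proof (cases "entries a S \<subseteq> entries a T")
    case True
    have "S x = T x" if "x \<in> diag a" for x
      using raises_to_ceil[OF rel that] ceil_in_self[of "S x" "entries a T"] True that
      by (auto simp: entries_def)
    then show ?thesis using wt_cong[of a S T] fixed_slide.refl by metis
  next
    case False
    then obtain v where v: "v \<in> entries a S" "v \<notin> entries a T" by blast
    then obtain x0 where x0: "x0 \<in> diag a" "S x0 = v" by (auto simp: entries_def)
    let ?S' = "merge_up v S"
    have gv: "ceil_in (entries a T) v \<in> entries a T" "v < ceil_in (entries a T) v"
      using ceil_in(1,2)[OF raises_to_bounded[OF rel v(1)]] v(2) by (auto simp: le_less)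
    have v0: "0 < v" using ASSF_pos[OF S x0(1)] x0(2) by simp
    have vn: "v < length a"
      using gv ASSF_le_length[OF T] by (fastforce simp: entries_def)
    have v1: "(v, 1) \<notin> diag a" using leftmost_col_eq_1_iff[OF T] v(2) by blast
    have S': "?S' \<in> ASSF a"
      by (rule ASSF_merge_up[OF S v0 v1 raises_to_left_merging_merge_up[OF rel v(2)]])
    have rel': "raises_to a ?S' T" by (rule raises_to_merge_up[OF rel v])
    have "(\<Sum>x\<in>diag a. T x - ?S' x) < (\<Sum>x\<in>diag a. T x - S x)"
    proof (rule sum_strict_mono_ex1[OF finite_diag])
      show "\<forall>x\<in>diag a. T x - ?S' x \<le> T x - S x" by (auto simp: merge_up_def)
      show "\<exists>x\<in>diag a. T x - ?S' x < T x - S x"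
        using x0 gv(2) raises_to_ceil[OF rel x0(1)] by (intro bexI[of _ x0]) (auto simp: merge_up_def)
    qed
    then have "fixed_slide (wt a T) (wt a ?S')" using less.hyps S' rel' by blast
    moreover have "Suc v \<in> entries a S" if "wt a T ! v \<noteq> 0"
      using that vn raises_to_entries[OF rel] entry_count_pos_iff[of a T "Suc v"] by (auto simp: nth_wt)
    ultimately show ?thesis using fixed_slide_merge_up v0 vn by blast
  qed
qed

lemma obtain_upper_subset:
  fixes f :: "'a \<Rightarrow> 'b::linorder"
  assumes fin: "finite Y" and inj: "inj_on f Y" and i: "i \<le> card Y"
  obtains X where "X \<subseteq> Y" "card X = i" "\<And>x y. x \<in> X \<Longrightarrow> y \<in> Y \<Longrightarrow> f x \<le> f y \<Longrightarrow> y \<in> X"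
  using i
proof (induction i arbitrary: thesis)
  case 0
  then show ?case by (metis card.empty empty_iff empty_subsetI)
next
  case (Suc i)
  then obtain X where X: "X \<subseteq> Y" "card X = i" and up: "\<And>x y. x \<in> X \<Longrightarrow> y \<in> Y \<Longrightarrow> f x \<le> f y \<Longrightarrow> y \<in> X"
    by (metis Suc_leD)
  have "Y - X \<noteq> {}" using X Suc.prems(2) by auto
  then have "Max (f ` (Y - X)) \<in> f ` (Y - X)" using fin by (intro Max_in) auto
  then obtain y0 where y0: "y0 \<in> Y - X" "f y0 = Max (f ` (Y - X))" by auto
  have max: "f y \<le> f y0" if "y \<in> Y - X" for y using fin that y0(2) by (auto intro: Max_ge)
  show ?case
  proof (rule Suc.prems(1))
    show "insert y0 X \<subseteq> Y" using X(1) y0 by auto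
    show "card (insert y0 X) = Suc i" using finite_subset[OF X(1) fin] y0 X(2) by simp
    fix x y assume x: "x \<in> insert y0 X" and y: "y \<in> Y" and le: "f x \<le> f y"
    show "y \<in> insert y0 X"
    proof (cases "x \<in> X \<or> y \<in> X")
      case False
      then have "f y = f y0" using x y le max[of y] by (auto intro: antisym)
      then show ?thesis using inj_onD[OF inj _ y] y0(1) by auto
    qed (use up y le in blast)
  qed
qed

lemma obtain_rightmost_cells:
  assumes S: "S \<in> ASSF a" and i: "i \<le> entry_count a S u"
  obtains X where "X \<subseteq> {x \<in> diag a. S x = u}" "card X = i"
    "\<And>x y. x \<in> X \<Longrightarrow> y \<in> diag a \<Longrightarrow> S y = u \<Longrightarrow> snd x \<le> snd y \<Longrightarrow> y \<in> X"
proof -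
  let ?Y = "{x \<in> diag a. S x = u}"
  have "finite ?Y" using finite_diag by simp
  moreover have "inj_on snd ?Y" by (rule inj_onI) (use ASSF_col_inj[OF S] in auto)
  moreover have "i \<le> card ?Y" using i by (simp add: entry_count_def)
  ultimately obtain X where "X \<subseteq> ?Y" "card X = i"
    "\<And>x y. x \<in> X \<Longrightarrow> y \<in> ?Y \<Longrightarrow> snd x \<le> snd y \<Longrightarrow> y \<in> X"
    using obtain_upper_subset[of ?Y snd i] by blast
  then show ?thesis using that by blast
qed

text \<open>Splitting \<open>i\<close> of the entries \<open>v + 1\<close> off into a new value \<open>v\<close> is possible by taking the \<open>i\<close>
  rightmost ones, unless this would move the first-column entry \<open>v + 1\<close>.\<close>

lemma split_rightmost:
  assumes S: "S \<in> ASSF a" and v: "0 < v" "v \<notin> entries a S"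
    and i: "i \<le> entry_count a S (Suc v)"
    and first: "(Suc v, 1) \<in> diag a \<Longrightarrow> i < entry_count a S (Suc v)"
  obtains R where "R \<in> ASSF a" "merge_up v R = S" "left_merging a R S" "entry_count a R v = i"
proof -
  obtain X where X: "X \<subseteq> {x \<in> diag a. S x = Suc v}" "card X = i"
    and up: "\<And>x y. x \<in> X \<Longrightarrow> y \<in> diag a \<Longrightarrow> S y = Suc v \<Longrightarrow> snd x \<le> snd y \<Longrightarrow> y \<in> X"
    using obtain_rightmost_cells[OF S i] by blast
  define R where "R = (\<lambda>x. if x \<in> X then v else S x)"
  have XY: "x \<in> diag a" "S x = Suc v" if "x \<in> X" for x using that X(1) by auto
  have Sv: "S x \<noteq> v" for x
    using v ASSF_outside[OF S, of x] by (cases "x \<in> diag a") (auto simp: entries_def)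
  have merge: "merge_up v R = S" using XY Sv by (auto simp: merge_up_def R_def)
  have left: "left_merging a R S"
    unfolding left_merging_def
  proof (intro ballI impI)
    fix x y assume x: "x \<in> diag a" and y: "y \<in> diag a" and h: "S x = S y \<and> R x < R y"
    then have "x \<in> X" "y \<notin> X" using XY by (auto simp: R_def split: if_splits)
    moreover from this have "S y = Suc v" using h XY by simp
    ultimately show "snd y < snd x" using up y by (meson not_le)
  qed
  have "R \<in> ASSF a"
  proof (rule ASSF_unrelabel[OF S mono_merge_up_value[of v] _ _ _ _ left])
    show "S x = (if R x = v then Suc v else R x)" for x
      using XY Sv by (auto simp: R_def)
    show "R (r, 1) = r" if r: "(r, 1) \<in> diag a" for r
    proof (cases "(r, 1) \<in> X")
      case True
      then have "r = Suc v" using XY ASSF_first_col[OF S r] by simp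
      have "{x \<in> diag a. S x = Suc v} = X" using up[OF True] X(1) by (auto simp: diag_def)
      then show ?thesis using first r X(2) \<open>r = Suc v\<close> by (simp add: entry_count_def)
    qed (use ASSF_first_col[OF S r] in \<open>simp add: R_def\<close>)
  qed (use XY ASSF_outside[OF S] ASSF_pos[OF S] v(1) in \<open>auto simp: R_def\<close>)
  moreover have "entry_count a R v = i"
  proof -
    have "{x \<in> diag a. R x = v} = X" using XY Sv by (auto simp: R_def)
    then show ?thesis using X(2) by (simp add: entry_count_def)
  qed
  ultimately show ?thesis using that merge left by blast
qed

lemma fixed_slide_lift:
  assumes T: "T \<in> ASSF a" and slide: "fixed_slide (wt a T) c"
  shows "\<exists>S\<in>ASSF a. raises_to a S T \<and> wt a S = c"
  using slide
proof (induction rule: fixed_slide.induct)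
  case refl
  then show ?case using T raises_to_refl[OF T] by blast
next
  case (move c p k i j)
  from move.IH obtain S where S: "S \<in> ASSF a" and rel: "raises_to a S T" and wS: "wt a S = c"
    by blast
  define v where "v = Suc p"
  have lenc: "length c = length a" using wS by auto
  have vn: "v < length a" using move.hyps(2) lenc by (simp add: v_def)
  have "entry_count a S v = 0" using move.hyps(3) wS nth_wt[of p a S] vn by (simp add: v_def)
  then have vS: "v \<notin> entries a S" using entry_count_pos_iff[of a S v] by simp
  have cnt: "entry_count a S (Suc v) = i + j"
    using move.hyps(2,4,5) wS nth_wt[of "Suc p" a S] lenc by (simp add: v_def)
  have j: "0 < j" if "Suc v \<in> entries a T"
    using that move.hyps(6) vn entry_count_pos_iff[of a T "Suc v"] by (simp add: v_def nth_wt)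
  have "i < entry_count a S (Suc v)" if "(Suc v, 1) \<in> diag a"
    using j leftmost_col_eq_1_iff[OF T, of "Suc v"] that cnt by auto
  then obtain R where R: "R \<in> ASSF a" "merge_up v R = S" "left_merging a R S" "entry_count a R v = i"
    using split_rightmost[OF S _ vS, of i] cnt by (auto simp: v_def)
  have cntR: "entry_count a R (Suc v) = j" using entry_count_merge_up[of a v R "Suc v"] R(2,4) cnt by simp
  have "raises_to a R T"
  proof (rule raises_to_of_merge_up)
    show "v \<notin> entries a T" using vS raises_to_entries[OF rel] by blast
    show "Suc v \<in> entries a R" if "Suc v \<in> entries a T"
      using j[OF that] cntR entry_count_pos_iff[of a R "Suc v"] by simp
  qed (use rel R in simp_all)
  moreover have "wt a R = c[p := i, Suc p := j]"
    using wt_merge_up[of v a R] vn R(2,4) cntR wS by (simp add: v_def)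
  ultimately show ?case using R(1) by blast
qed

lemma card_preimage_eq_sum_entry_count:
  assumes "finite U"
  shows "card {x \<in> diag a. S x \<in> U} = (\<Sum>u\<in>U. entry_count a S u)"
  using assms
proof (induction U rule: finite_induct)
  case (insert u U)
  have "{x \<in> diag a. S x \<in> insert u U} = {x \<in> diag a. S x = u} \<union> {x \<in> diag a. S x \<in> U}" by auto
  moreover have "{x \<in> diag a. S x = u} \<inter> {x \<in> diag a. S x \<in> U} = {}" using insert by auto
  ultimately show ?case
    using insert finite_diag[of a] by (simp add: entry_count_def card_Un_disjoint)
qed simp

lemma entry_count_eq_of_wt_eq:
  assumes S1: "S1 \<in> ASSF a" and S2: "S2 \<in> ASSF a" and w: "wt a S1 = wt a S2"
  shows "entry_count a S1 u = entry_count a S2 u"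
proof (cases "1 \<le> u \<and> u \<le> length a")
  case True
  then have "u - 1 < length a" "Suc (u - 1) = u" by auto
  then show ?thesis using w nth_wt[of "u - 1" a S1] nth_wt[of "u - 1" a S2] by metis
next
  case False
  then have "{x \<in> diag a. S1 x = u} = {}" "{x \<in> diag a. S2 x = u} = {}"
    using ASSF_pos[OF S1] ASSF_pos[OF S2] ASSF_le_length[OF S1] ASSF_le_length[OF S2] by fastforce+
  then show ?thesis unfolding entry_count_def by metis
qed

text \<open>Counting argument: the cells of \<open>T\<close>-value \<open>T x\<close> whose preimage is at most \<open>S\<^sub>1 x\<close> are as
  many for \<open>S\<^sub>1\<close> as for \<open>S\<^sub>2\<close>, but left merging would make those of \<open>S\<^sub>2\<close> a proper subset.\<close>

lemma raises_to_same_wt_le: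
  assumes S1: "S1 \<in> ASSF a" and S2: "S2 \<in> ASSF a" and w: "wt a S1 = wt a S2"
    and rel1: "raises_to a S1 T" and rel2: "raises_to a S2 T" and x: "x \<in> diag a"
  shows "S2 x \<le> S1 x"
proof (rule ccontr)
  assume lt: "\<not> S2 x \<le> S1 x"
  let ?U = "{u. u \<le> S1 x \<and> ceil_in (entries a T) u = T x}"
  define A1 where "A1 = {y \<in> diag a. T y = T x \<and> S1 y \<le> S1 x}"
  define A2 where "A2 = {y \<in> diag a. T y = T x \<and> S2 y \<le> S1 x}"
  have finU: "finite ?U" by (rule finite_subset[of _ "{..S1 x}"]) auto
  have "A1 = {y \<in> diag a. S1 y \<in> ?U}" unfolding A1_def using raises_to_ceil[OF rel1] by auto
  moreover have "A2 = {y \<in> diag a. S2 y \<in> ?U}" unfolding A2_def using raises_to_ceil[OF rel2] by auto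
  ultimately have "card A1 = card A2"
    using card_preimage_eq_sum_entry_count[OF finU] entry_count_eq_of_wt_eq[OF S1 S2 w] by simp
  moreover have "A2 \<subseteq> A1"
  proof
    fix z assume "z \<in> A2"
    then have z: "z \<in> diag a" "T z = T x" "S2 z \<le> S1 x" unfolding A2_def by auto
    have "S1 z \<le> S1 x"
    proof (cases "snd x \<le> snd z")
      case True
      then show ?thesis using left_mergingD[OF raises_to_left_merging[OF rel1] x z(1)] z(2) by force
    next
      case False
      moreover have "S2 z < S2 x" using z(3) lt by simp
      ultimately show ?thesis using left_mergingD[OF raises_to_left_merging[OF rel2] z(1) x] z(2) by simp
    qed
    then show "z \<in> A1" using z unfolding A1_def by simp
  qed
  moreover have "x \<in> A1" "x \<notin> A2" using x lt unfolding A1_def A2_def by auto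
  moreover have "finite A1" unfolding A1_def using finite_diag by simp
  ultimately show False using psubset_card_mono[of A1 A2] by auto
qed

lemma raises_to_same_wt_eq:
  assumes "S1 \<in> ASSF a" "S2 \<in> ASSF a" "wt a S1 = wt a S2" "raises_to a S1 T" "raises_to a S2 T"
  shows "S1 = S2"
proof
  fix x show "S1 x = S2 x"
  proof (cases "x \<in> diag a")
    case True
    then show ?thesis
      using raises_to_same_wt_le[OF assms] raises_to_same_wt_le[OF assms(2,1) assms(3)[symmetric] assms(5,4)]
      by (simp add: antisym)
  qed (use ASSF_outside[OF assms(1)] ASSF_outside[OF assms(2)] in simp)
qed

lemma bij_betw_raise_all:
  "bij_betw (raise_all a) {S \<in> ASSF a. wt a S = c} {T \<in> HSSF a. fixed_slide (wt a T) c}"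
  unfolding bij_betw_def
proof (intro conjI inj_onI subset_antisym subsetI)
  fix S1 S2 assume "S1 \<in> {S \<in> ASSF a. wt a S = c}" "S2 \<in> {S \<in> ASSF a. wt a S = c}"
    and "raise_all a S1 = raise_all a S2"
  then show "S1 = S2" using raises_to_same_wt_eq raises_to_raise_all by (metis (mono_tags) mem_Collect_eq)
next
  fix T assume "T \<in> raise_all a ` {S \<in> ASSF a. wt a S = c}"
  then obtain S where "S \<in> ASSF a" "wt a S = c" "T = raise_all a S" by auto
  then show "T \<in> {T \<in> HSSF a. fixed_slide (wt a T) c}"
    using HSSF_raise_all raises_to_fixed_slide[OF _ ASSF_raise_all raises_to_raise_all] by auto
next
  fix T assume "T \<in> {T \<in> HSSF a. fixed_slide (wt a T) c}"
  then have T: "T \<in> HSSF a" "fixed_slide (wt a T) c" by auto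
  then obtain S where "S \<in> ASSF a" "raises_to a S T" "wt a S = c"
    using fixed_slide_lift[of T a c] by (auto simp: HSSF_def)
  then show "T \<in> raise_all a ` {S \<in> ASSF a. wt a S = c}"
    using raises_to_HSSF_eq_raise_all[OF _ T(1)] by blast
qed

theorem theorem4p17:
  fixes a :: "nat list" and n :: nat
  assumes "length a = n"
  shows "\<forall>c. atom_coeff a c = (\<Sum>S \<in> HSSF a. slide_coeff (wt a S) c)"
proof
  fix c
  have "atom_coeff a c = card {T \<in> HSSF a. fixed_slide (wt a T) c}"
    unfolding atom_coeff_def by (rule bij_betw_same_card[OF bij_betw_raise_all])
  also have "\<dots> = (\<Sum>S \<in> HSSF a. slide_coeff (wt a S) c)"
    using sum.inter_filter[OF finite_HSSF[of a], of "\<lambda>_. 1 :: nat" "\<lambda>T. fixed_slide (wt a T) c"]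
    by (simp add: slide_coeff_def)
  finally show "atom_coeff a c = (\<Sum>S \<in> HSSF a. slide_coeff (wt a S) c)" .
qed

end
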